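(* For $\alpha\in\mathbb{K}^\times$ let $A_{8,\alpha}$ be the evolution algebra over the field $\mathbb{K}$ with natural basis $\{u,v\}$ such that $u^2=u$ and $v^2=\alpha u$. For $\alpha,\beta\in\mathbb{K}^\times$, $A_{8,\alpha}$ and $A_{8,\beta}$ are isomorphic if and only if $\overline\alpha=\overline\beta$ in $G_2=\mathbb{K}^\times/(\mathbb{K}^\times)^2$.
   Context: An evolution algebra over $\mathbb{K}$ is a $\mathbb{K}$-algebra with a basis $\{e_i\}$ (natural basis) such that $e_ie_j=0$ for $i\neq j$. $\overline\rho$ denotes the class of $\rho\in\mathbb{K}^\times$ in $G_2$. *)

theory Defs
  imports Main
begin

text \<open>Elements of a 2-dimensional K-algebra with natural basis {u,v} are
coordinate pairs (a,b) meaning a u + b v.  Vector space operations on K x K:\<close>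

definition vadd :: "'a::field \<times> 'a \<Rightarrow> 'a \<times> 'a \<Rightarrow> 'a \<times> 'a" where
  "vadd x y = (fst x + fst y, snd x + snd y)"

definition vscale :: "'a::field \<Rightarrow> 'a \<times> 'a \<Rightarrow> 'a \<times> 'a" where
  "vscale c x = (c * fst x, c * snd x)"

text \<open>Multiplication of the evolution algebra A_{8,alpha}: u^2 = u, v^2 = alpha u, uv = vu = 0,
extended bilinearly: (a u + b v)(c u + d v) = (a c + alpha b d) u.\<close>

definition A8_mult :: "'a::field \<Rightarrow> 'a \<times> 'a \<Rightarrow> 'a \<times> 'a \<Rightarrow> 'a \<times> 'a" where
  "A8_mult \<alpha> x y = (fst x * fst y + \<alpha> * (snd x * snd y), 0)"

definition A8_iso :: "'a::field \<Rightarrow> 'a \<Rightarrow> ('a \<times> 'a \<Rightarrow> 'a \<times> 'a) \<Rightarrow> bool" where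
  "A8_iso \<alpha> \<beta> f \<longleftrightarrow> bij f
     \<and> (\<forall>x y. f (vadd x y) = vadd (f x) (f y))
     \<and> (\<forall>c x. f (vscale c x) = vscale c (f x))
     \<and> (\<forall>x y. f (A8_mult \<alpha> x y) = A8_mult \<beta> (f x) (f y))"

definition A8_isomorphic :: "'a::field \<Rightarrow> 'a \<Rightarrow> bool" where
  "A8_isomorphic \<alpha> \<beta> \<longleftrightarrow> (\<exists>f. A8_iso \<alpha> \<beta> f)"

definition same_square_class :: "'a::field \<Rightarrow> 'a \<Rightarrow> bool" where
  "same_square_class \<alpha> \<beta> \<longleftrightarrow> (\<exists>\<gamma>. \<gamma> \<noteq> 0 \<and> \<alpha> = \<gamma>^2 * \<beta>)"

end

theory Submission
  imports Defs
begin

text \<open>The element u is the only nonzero idempotent of A_{8,beta}, so every isomorphism fixes it.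
Since uv = 0, the image of v is then a multiple s v with s nonzero, and comparing the images of
v^2 = alpha u gives alpha = s^2 beta. Conversely, rescaling v by gamma turns A_{8,gamma^2 beta}
into A_{8,beta}. Neither direction needs alpha and beta to be nonzero.\<close>

lemma A8_idempotent_iff: "A8_mult \<beta> x x = x \<longleftrightarrow> x = (0, 0) \<or> x = (1, 0)"
proof (cases x)
  case (Pair p q)
  have "A8_mult \<beta> x x = x \<longleftrightarrow> q = 0 \<and> p * (p - 1) = 0"
    using Pair by (auto simp: A8_mult_def algebra_simps)
  also have "\<dots> \<longleftrightarrow> x = (0, 0) \<or> x = (1, 0)"
    using Pair by auto
  finally show ?thesis .
qed

lemma A8_iso_zero:
  assumes "A8_iso \<alpha> \<beta> f"
  shows "f (0, 0) = (0, 0)"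
proof -
  have "f (vscale 0 (0, 0)) = vscale 0 (f (0, 0))"
    using assms by (simp add: A8_iso_def)
  then show ?thesis by (simp add: vscale_def)
qed

lemma A8_iso_nonzero:
  assumes "A8_iso \<alpha> \<beta> f" and "x \<noteq> (0, 0)"
  shows "f x \<noteq> (0, 0)"
  using assms A8_iso_zero[OF assms(1)] by (metis A8_iso_def bij_is_inj injD)

lemma A8_iso_fixes_u:
  assumes "A8_iso \<alpha> \<beta> f"
  shows "f (1, 0) = (1, 0)"
proof -
  have "A8_mult \<beta> (f (1, 0)) (f (1, 0)) = f (A8_mult \<alpha> (1, 0) (1, 0))"
    using assms by (simp add: A8_iso_def)
  also have "\<dots> = f (1, 0)"
    by (simp add: A8_mult_def)
  finally have "f (1, 0) = (0, 0) \<or> f (1, 0) = (1, 0)"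
    by (simp add: A8_idempotent_iff)
  then show ?thesis
    using A8_iso_nonzero[OF assms] by auto
qed

lemma A8_iso_maps_v:
  assumes "A8_iso \<alpha> \<beta> f"
  obtains s where "s \<noteq> 0" and "f (0, 1) = (0, s)"
proof -
  obtain r s where v: "f (0, 1) = (r, s)" by fastforce
  have "(0, 0) = f (A8_mult \<alpha> (1, 0) (0, 1))"
    using A8_iso_zero[OF assms] by (simp add: A8_mult_def)
  also have "\<dots> = A8_mult \<beta> (1, 0) (r, s)"
    using assms A8_iso_fixes_u[OF assms] v by (simp add: A8_iso_def)
  finally have "r = 0"
    by (simp add: A8_mult_def)
  moreover have "s \<noteq> 0"
    using A8_iso_nonzero[OF assms, of "(0, 1)"] v \<open>r = 0\<close> by simp
  ultimately show ?thesis
    using that v by blast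
qed

lemma A8_iso_imp_same_square_class:
  assumes "A8_iso \<alpha> \<beta> f"
  shows "same_square_class \<alpha> \<beta>"
proof -
  obtain s where "s \<noteq> 0" and v: "f (0, 1) = (0, s)"
    using A8_iso_maps_v[OF assms] .
  have "vscale \<alpha> (1, 0) = vscale \<alpha> (f (1, 0))"
    using A8_iso_fixes_u[OF assms] by simp
  also have "\<dots> = f (vscale \<alpha> (1, 0))"
    using assms by (simp add: A8_iso_def)
  also have "\<dots> = f (A8_mult \<alpha> (0, 1) (0, 1))"
    by (simp add: A8_mult_def vscale_def)
  also have "\<dots> = A8_mult \<beta> (0, s) (0, s)"
    using assms v by (simp add: A8_iso_def)
  finally have "\<alpha> = s^2 * \<beta>"
    by (simp add: vscale_def A8_mult_def power2_eq_square algebra_simps)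
  then show ?thesis
    using \<open>s \<noteq> 0\<close> unfolding same_square_class_def by blast
qed

lemma A8_iso_rescale_v:
  assumes "\<gamma> \<noteq> 0"
  shows "A8_iso (\<gamma>^2 * \<beta>) \<beta> (\<lambda>x. (fst x, \<gamma> * snd x))"
proof -
  have "bij (\<lambda>x. (fst x, \<gamma> * snd x))"
    by (rule o_bij[where g = "\<lambda>y. (fst y, snd y / \<gamma>)"]) (use assms in auto)
  then show ?thesis
    by (simp add: A8_iso_def vadd_def vscale_def A8_mult_def power2_eq_square algebra_simps)
qed

theorem lemma3p17:
  fixes \<alpha> \<beta> :: "'a::field"
  assumes "\<alpha> \<noteq> 0" and "\<beta> \<noteq> 0"
  shows "A8_isomorphic \<alpha> \<beta> \<longleftrightarrow> same_square_class \<alpha> \<beta>"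
proof
  assume "A8_isomorphic \<alpha> \<beta>"
  then show "same_square_class \<alpha> \<beta>"
    unfolding A8_isomorphic_def using A8_iso_imp_same_square_class by blast
next
  assume "same_square_class \<alpha> \<beta>"
  then obtain \<gamma> where "\<gamma> \<noteq> 0" and "\<alpha> = \<gamma>^2 * \<beta>"
    unfolding same_square_class_def by blast
  then show "A8_isomorphic \<alpha> \<beta>"
    unfolding A8_isomorphic_def using A8_iso_rescale_v by blast
qed

end
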